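(* Fix a start node $s\in V$ and let $\ell_a,\ell_b$ be two labels with start node $s$ whose node sets do not contain $s$ (i.e. not fully extended), such that $v(\ell_a)=v(\ell_b)$ and $$\bar c(\ell_a)\le \bar c(\ell_b),\qquad t(\ell_a)\le t(\ell_b),\qquad \mathscr N(\ell_a)\subseteq \mathscr N(\ell_b).$$ Then $\ell_a$ dominates $\ell_b$ in the following sense: for every finite sequence of nodes $j_1,\dots,j_m$ with $j_m=s$ such that successively extending $\ell_b$ by $j_1,\dots,j_m$ is a valid sequence of extensions producing a fully-extended label $\ell_b^*$ with $t(\ell_b^* )\le q(\ell_b^* )$ (a length-feasible cycle), successively extending $\ell_a$ by $j_1,\dots,j_m$ is also a valid sequence of extensions, and the resulting fully-extended label $\ell_a^*$ satisfies $t(\ell_a^* )\le q(\ell_a^* )$ and $\bar c(\ell_a^* )\le \bar c(\ell_b^* )$.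
   Context: $G=(V,E)$ is an undirected graph with a critical time $q_i>0$ for each node $i\in V$, a travel time $t_{i,j}=t_{j,i}\ge 0$ for each edge $\{i,j\}\in E$, and a weight $\pi_i\in\mathbb R$ for each node (no sign restriction). Fix a start node $s\in V$. A label represents a path $P=(i_0,i_1,\dots,i_K)$ in $G$ with $i_0=s$ and is the tuple $\ell=(\mathscr N,v,\bar c,t,q)$ with $\mathscr N(\ell)=\{i_1,\dots,i_K\}$, $v(\ell)=i_K$, $\bar c(\ell)=1-\sum_{i\in\mathscr N(\ell)}\pi_i$, $t(\ell)=\sum_{k=1}^K t_{i_{k-1},i_k}$, $q(\ell)=\min_{k=0,\dots,K} q_{i_k}$. The initial label is $\ell_s=(\emptyset,s,1,0,q_s)$. A label $\ell$ may be extended by a node $j\in V\setminus\mathscr N(\ell)$ with $\{v(\ell),j\}\in E$, giving the label $\ell^+$ with $\mathscr N(\ell^+)=\mathscr N(\ell)\cup\{j\}$, $v(\ell^+)=j$, $\bar c(\ell^+)=\bar c(\ell)-\pi_j$, $t(\ell^+)=t(\ell)+t_{v(\ell),j}$, $q(\ell^+)=\min\{q(\ell),q_j\}$. A label $\ell\neq\ell_s$ is fully extended if $v(\ell)=s$; it then represents a cycle, whose reduced cost is $\bar c(\ell)$ and which is length-feasible iff $t(\ell)\le q(\ell)$. *)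

theory Defs
  imports Complex_Main
begin

text \<open>Labels (N, v, cbar, t, q) of the labeling algorithm.\<close>
record 'a label =
  lnodes :: "'a set"
  lvert  :: 'a
  lcost  :: real
  ltime  :: real
  lcrit  :: real

fun is_walk :: "'a set \<Rightarrow> 'a set set \<Rightarrow> 'a list \<Rightarrow> bool" where
  "is_walk V E [] = False"
| "is_walk V E [i] = (i \<in> V)"
| "is_walk V E (i # j # is) = (i \<in> V \<and> {i, j} \<in> E \<and> is_walk V E (j # is))"

fun path_time :: "('a \<Rightarrow> 'a \<Rightarrow> real) \<Rightarrow> 'a list \<Rightarrow> real" where
  "path_time tt [] = 0"
| "path_time tt [i] = 0"
| "path_time tt (i # j # is) = tt i j + path_time tt (j # is)"

text \<open>The label representing the path P = s # is (so the node set is the set of i_1..i_K).\<close>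
definition label_of_path ::
  "('a \<Rightarrow> 'a \<Rightarrow> real) \<Rightarrow> ('a \<Rightarrow> real) \<Rightarrow> ('a \<Rightarrow> real) \<Rightarrow> 'a \<Rightarrow> 'a list \<Rightarrow> 'a label" where
  "label_of_path tt qc \<pi> s is =
     \<lparr> lnodes = set is,
       lvert = last (s # is),
       lcost = 1 - (\<Sum>i\<in>set is. \<pi> i),
       ltime = path_time tt (s # is),
       lcrit = Min (qc ` set (s # is)) \<rparr>"

definition can_extend :: "'a set \<Rightarrow> 'a set set \<Rightarrow> 'a label \<Rightarrow> 'a \<Rightarrow> bool" where
  "can_extend V E l j = (j \<in> V \<and> j \<notin> lnodes l \<and> {lvert l, j} \<in> E)"

definition extend ::
  "('a \<Rightarrow> 'a \<Rightarrow> real) \<Rightarrow> ('a \<Rightarrow> real) \<Rightarrow> ('a \<Rightarrow> real) \<Rightarrow> 'a label \<Rightarrow> 'a \<Rightarrow> 'a label" where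
  "extend tt qc \<pi> l j =
     \<lparr> lnodes = insert j (lnodes l),
       lvert = j,
       lcost = lcost l - \<pi> j,
       ltime = ltime l + tt (lvert l) j,
       lcrit = min (lcrit l) (qc j) \<rparr>"

fun extend_seq ::
  "('a \<Rightarrow> 'a \<Rightarrow> real) \<Rightarrow> ('a \<Rightarrow> real) \<Rightarrow> ('a \<Rightarrow> real) \<Rightarrow> 'a label \<Rightarrow> 'a list \<Rightarrow> 'a label" where
  "extend_seq tt qc \<pi> l [] = l"
| "extend_seq tt qc \<pi> l (j # js) = extend_seq tt qc \<pi> (extend tt qc \<pi> l j) js"

fun valid_ext_seq ::
  "'a set \<Rightarrow> 'a set set \<Rightarrow> ('a \<Rightarrow> 'a \<Rightarrow> real) \<Rightarrow> ('a \<Rightarrow> real) \<Rightarrow> ('a \<Rightarrow> real)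
   \<Rightarrow> 'a label \<Rightarrow> 'a list \<Rightarrow> bool" where
  "valid_ext_seq V E tt qc \<pi> l [] = True"
| "valid_ext_seq V E tt qc \<pi> l (j # js) =
     (can_extend V E l j \<and> valid_ext_seq V E tt qc \<pi> (extend tt qc \<pi> l j) js)"

end

theory Submission
  imports Defs
begin

text \<open>A label that is no later, no more costly, visits a subset of the nodes and has no
  smaller critical time than another label at the same vertex keeps all four properties under
  any common extension, and every extension valid for the larger label is valid for the smaller
  one because its node set is smaller. The critical-time comparison holds initially since the
  critical time of a path is a minimum over its nodes.\<close>

definition dominates :: "'a label \<Rightarrow> 'a label \<Rightarrow> bool" where
  "dominates la lb \<longleftrightarrow>
     lvert la = lvert lb \<and> lnodes la \<subseteq> lnodes lb \<and> lcost la \<le> lcost lb \<and>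
     ltime la \<le> ltime lb \<and> lcrit lb \<le> lcrit la"

lemma can_extend_dominates:
  "dominates la lb \<Longrightarrow> can_extend V E lb j \<Longrightarrow> can_extend V E la j"
  by (auto simp: dominates_def can_extend_def)

lemma dominates_extend:
  "dominates la lb \<Longrightarrow> dominates (extend tt qc \<pi> la j) (extend tt qc \<pi> lb j)"
  by (auto simp: dominates_def extend_def)

lemma dominates_extend_seq:
  assumes "dominates la lb" and "valid_ext_seq V E tt qc \<pi> lb js"
  shows "valid_ext_seq V E tt qc \<pi> la js \<and>
    dominates (extend_seq tt qc \<pi> la js) (extend_seq tt qc \<pi> lb js)"
  using assms
proof (induction js arbitrary: la lb)
  case Nil
  then show ?case by simp
next
  case (Cons j js)
  then have "can_extend V E la j"
    by (auto intro: can_extend_dominates)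
  moreover have "dominates (extend tt qc \<pi> la j) (extend tt qc \<pi> lb j)"
    using Cons.prems(1) by (rule dominates_extend)
  ultimately show ?case
    using Cons.IH Cons.prems(2) by simp
qed

lemma lcrit_label_of_path_antimono:
  assumes "set Pa \<subseteq> set Pb"
  shows "lcrit (label_of_path tt qc \<pi> s Pb) \<le> lcrit (label_of_path tt qc \<pi> s Pa)"
proof -
  have "Min (qc ` set (s # Pb)) \<le> Min (qc ` set (s # Pa))"
    by (rule Min_antimono) (use assms in auto)
  then show ?thesis by (simp add: label_of_path_def)
qed

theorem lemma1:
  fixes V :: "'a set" and E :: "'a set set"
    and tt :: "'a \<Rightarrow> 'a \<Rightarrow> real" and qc :: "'a \<Rightarrow> real" and \<pi> :: "'a \<Rightarrow> real"
    and s :: 'a and Pa Pb js :: "'a list"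
  assumes finV: "finite V"
    and E_sub: "\<forall>e\<in>E. \<exists>i j. e = {i, j} \<and> i \<in> V \<and> j \<in> V"
    and q_pos: "\<forall>i\<in>V. qc i > 0"
    and t_sym: "\<forall>i j. {i, j} \<in> E \<longrightarrow> tt i j = tt j i"
    and t_nonneg: "\<forall>i j. {i, j} \<in> E \<longrightarrow> tt i j \<ge> 0"
    and sV: "s \<in> V"
    and walk_a: "is_walk V E (s # Pa)"
    and walk_b: "is_walk V E (s # Pb)"
    and not_full_a: "s \<notin> lnodes (label_of_path tt qc \<pi> s Pa)"
    and not_full_b: "s \<notin> lnodes (label_of_path tt qc \<pi> s Pb)"
    and same_v: "lvert (label_of_path tt qc \<pi> s Pa) = lvert (label_of_path tt qc \<pi> s Pb)"
    and cost_le: "lcost (label_of_path tt qc \<pi> s Pa) \<le> lcost (label_of_path tt qc \<pi> s Pb)"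
    and time_le: "ltime (label_of_path tt qc \<pi> s Pa) \<le> ltime (label_of_path tt qc \<pi> s Pb)"
    and nodes_sub: "lnodes (label_of_path tt qc \<pi> s Pa) \<subseteq> lnodes (label_of_path tt qc \<pi> s Pb)"
    and js_ne: "js \<noteq> []"
    and js_last: "last js = s"
    and valid_b: "valid_ext_seq V E tt qc \<pi> (label_of_path tt qc \<pi> s Pb) js"
    and feas_b: "ltime (extend_seq tt qc \<pi> (label_of_path tt qc \<pi> s Pb) js)
                 \<le> lcrit (extend_seq tt qc \<pi> (label_of_path tt qc \<pi> s Pb) js)"
  shows "valid_ext_seq V E tt qc \<pi> (label_of_path tt qc \<pi> s Pa) js
    \<and> ltime (extend_seq tt qc \<pi> (label_of_path tt qc \<pi> s Pa) js)
        \<le> lcrit (extend_seq tt qc \<pi> (label_of_path tt qc \<pi> s Pa) js)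
    \<and> lcost (extend_seq tt qc \<pi> (label_of_path tt qc \<pi> s Pa) js)
        \<le> lcost (extend_seq tt qc \<pi> (label_of_path tt qc \<pi> s Pb) js)"
proof -
  let ?A = "label_of_path tt qc \<pi> s Pa" and ?B = "label_of_path tt qc \<pi> s Pb"
  have "lcrit ?B \<le> lcrit ?A"
    using nodes_sub by (intro lcrit_label_of_path_antimono) (simp add: label_of_path_def)
  with same_v nodes_sub cost_le time_le have "dominates ?A ?B"
    by (simp add: dominates_def)
  from dominates_extend_seq[OF this valid_b] feas_b show ?thesis
    unfolding dominates_def by linarith
qed

end
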